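(* Let $\alpha>0$, $A\ge0$, $B>0$, $t>0$, $w(x,t)=x^\alpha e^{-x}(A+B\theta(x-t))$ on $[0,\infty)$, and $D_n(t)=\det\left(\int_0^\infty x^{i+j}w(x,t)dx\right)_{i,j=0}^{n-1}$ (with $D_0:=1$). Then for $n\ge1$ $$t^2\frac{d^2}{dt^2}\ln D_n(t)=-n(n+\alpha)+\frac{D_{n+1}(t)D_{n-1}(t)}{D_n(t)^2}.$$
   Context: $\theta$ is the Heaviside function ($1$ for $x>0$, $0$ otherwise). *)

theory Defs
  imports "HOL-Analysis.Analysis" "Jordan_Normal_Form.Determinant"
begin

definition heaviside :: "real \<Rightarrow> real" where
  "heaviside x = (if x > 0 then 1 else 0)"

definition weight :: "real \<Rightarrow> real \<Rightarrow> real \<Rightarrow> real \<Rightarrow> real \<Rightarrow> real" where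
  "weight \<alpha> A B t x = x powr \<alpha> * exp (- x) * (A + B * heaviside (x - t))"

definition moment :: "real \<Rightarrow> real \<Rightarrow> real \<Rightarrow> real \<Rightarrow> nat \<Rightarrow> real" where
  "moment \<alpha> A B t k = (LBINT x:{0..}. x ^ k * weight \<alpha> A B t x)"

definition hankelD :: "real \<Rightarrow> real \<Rightarrow> real \<Rightarrow> nat \<Rightarrow> real \<Rightarrow> real" where
  "hankelD \<alpha> A B n t = det (mat n n (\<lambda>(i, j). moment \<alpha> A B t (i + j)))"

end

theory Submission
  imports Defs
begin

text \<open>The moments \<mu>_k(t) of w satisfy \<mu>_k' = \<phi> t^k with \<phi>(t) = -B t^\<alpha> e^(-t), and integration
  by parts gives the recurrence \<mu>_(k+1) = (k + \<alpha> + 1) \<mu>_k - c t^k with c = t \<phi>(t). By Jacobi's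
  formula (ln D_n)' = \<phi> a, where a = v^T K v is the quadratic form of K = H_n^-1 at v = (t^i);
  since K' = -\<phi> (K v)(K v)^T, differentiating once more gives
  t^2 (ln D_n)'' = c (\<alpha> - t) a + c (2 b - c a^2) with b = \<Sum> i t^i (K v)_i. Evaluating three
  bilinear forms in the shifted moments \<mu>_(i+j+1) once via K H = H K = I and once via the
  recurrence turns this into -n (n + \<alpha>) + h K_(n-1,n-1), where h = D_(n+1)/D_n is the Schur
  complement of H_n in H_(n+1) and K_(n-1,n-1) = D_(n-1)/D_n. All D_n are positive because
  h = \<integral> P^2 w for the monic polynomial P orthogonal to lower degrees.\<close>

section \<open>Hankel matrices\<close>

definition hankel_mat :: "(nat \<Rightarrow> 'a::comm_ring_1) \<Rightarrow> nat \<Rightarrow> 'a mat" where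
  "hankel_mat \<mu> m = mat m m (\<lambda>(i, j). \<mu> (i + j))"

text \<open>The inverse via the adjugate; junk (x / 0 = 0) when the determinant vanishes.\<close>
definition hankel_inv :: "(nat \<Rightarrow> 'a::field) \<Rightarrow> nat \<Rightarrow> nat \<Rightarrow> nat \<Rightarrow> 'a" where
  "hankel_inv \<mu> m i j = cofactor (hankel_mat \<mu> m) j i / det (hankel_mat \<mu> m)"

definition hankel_solve :: "(nat \<Rightarrow> 'a::field) \<Rightarrow> nat \<Rightarrow> (nat \<Rightarrow> 'a) \<Rightarrow> nat \<Rightarrow> 'a" where
  "hankel_solve \<mu> m v i = (\<Sum>j<m. hankel_inv \<mu> m i j * v j)"

lemma hankel_mat_carrier [simp]: "hankel_mat \<mu> m \<in> carrier_mat m m"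
  by (simp add: hankel_mat_def)

lemma hankel_mat_dim [simp]: "dim_row (hankel_mat \<mu> m) = m" "dim_col (hankel_mat \<mu> m) = m"
  by (simp_all add: hankel_mat_def)

lemma hankel_mat_index [simp]: "i < m \<Longrightarrow> j < m \<Longrightarrow> hankel_mat \<mu> m $$ (i, j) = \<mu> (i + j)"
  by (simp add: hankel_mat_def)

lemma hankel_inv_right:
  assumes "det (hankel_mat \<mu> m) \<noteq> 0" "i < m" "j < m"
  shows "(\<Sum>l<m. \<mu> (i + l) * hankel_inv \<mu> m l j) = (if i = j then 1 else 0)"
proof -
  have "(\<Sum>l<m. \<mu> (i + l) * cofactor (hankel_mat \<mu> m) j l)
      = (hankel_mat \<mu> m * adj_mat (hankel_mat \<mu> m)) $$ (i, j)"
    using assms(2,3) by (simp add: scalar_prod_def adj_mat_def atLeast0LessThan)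
  also have "\<dots> = (if i = j then det (hankel_mat \<mu> m) else 0)"
    unfolding adj_mat(2)[OF hankel_mat_carrier] using assms(2,3) by simp
  finally show ?thesis
    using assms(1) by (simp add: hankel_inv_def times_divide_eq_right flip: sum_divide_distrib)
qed

lemma hankel_inv_left:
  assumes "det (hankel_mat \<mu> m) \<noteq> 0" "i < m" "j < m"
  shows "(\<Sum>l<m. hankel_inv \<mu> m i l * \<mu> (l + j)) = (if i = j then 1 else 0)"
proof -
  have "(\<Sum>l<m. cofactor (hankel_mat \<mu> m) l i * \<mu> (l + j))
      = (adj_mat (hankel_mat \<mu> m) * hankel_mat \<mu> m) $$ (i, j)"
    using assms(2,3) by (simp add: scalar_prod_def adj_mat_def atLeast0LessThan)
  also have "\<dots> = (if i = j then det (hankel_mat \<mu> m) else 0)"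
    unfolding adj_mat(3)[OF hankel_mat_carrier] using assms(2,3) by simp
  finally show ?thesis
    using assms(1) by (simp add: hankel_inv_def times_divide_eq_left flip: sum_divide_distrib)
qed

lemma cofactor_hankel_mat_commute: "cofactor (hankel_mat \<mu> m) j i = cofactor (hankel_mat \<mu> m) i j"
proof -
  have "mat_delete (hankel_mat \<mu> m) j i = transpose_mat (mat_delete (hankel_mat \<mu> m) i j)"
    by (rule eq_matI) (auto simp: mat_delete_def hankel_mat_def add.commute)
  then show ?thesis
    using det_transpose[OF mat_delete_carrier[OF hankel_mat_carrier[of \<mu> m]], of i j]
    by (simp add: cofactor_def add.commute)
qed

lemma hankel_inv_sym: "hankel_inv \<mu> m i j = hankel_inv \<mu> m j i"
  unfolding hankel_inv_def cofactor_hankel_mat_commute[of \<mu> m i j] ..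

lemma hankel_mult_solve:
  assumes "det (hankel_mat \<mu> m) \<noteq> 0" "i < m"
  shows "(\<Sum>j<m. \<mu> (i + j) * hankel_solve \<mu> m v j) = v i"
proof -
  have "(\<Sum>j<m. \<mu> (i + j) * hankel_solve \<mu> m v j)
      = (\<Sum>l<m. (\<Sum>j<m. \<mu> (i + j) * hankel_inv \<mu> m j l) * v l)"
    unfolding hankel_solve_def
    by (simp add: sum_distrib_left sum_distrib_right mult.assoc) (rule sum.swap)
  also have "\<dots> = (\<Sum>l<m. if l = i then v l else 0)"
    using hankel_inv_right[OF assms] by (intro sum.cong) auto
  also have "\<dots> = v i"
    using assms(2) by simp
  finally show ?thesis .
qed

lemma hankel_solve_dot_commute:
  "(\<Sum>i<m. w i * hankel_solve \<mu> m v i) = (\<Sum>i<m. v i * hankel_solve \<mu> m w i)"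
  unfolding hankel_solve_def sum_distrib_left
  by (subst sum.swap) (simp add: hankel_inv_sym mult_ac)

definition hankel_schur :: "(nat \<Rightarrow> 'a::field) \<Rightarrow> nat \<Rightarrow> 'a" where
  "hankel_schur \<mu> m = \<mu> (2 * m) - (\<Sum>i<m. \<mu> (m + i) * hankel_solve \<mu> m (\<lambda>j. \<mu> (m + j)) i)"

text \<open>Coefficients of the monic polynomial of degree m orthogonal to all lower degrees.\<close>
definition monic_orth_coeff :: "(nat \<Rightarrow> 'a::field) \<Rightarrow> nat \<Rightarrow> nat \<Rightarrow> 'a" where
  "monic_orth_coeff \<mu> m i = (if i = m then 1 else - hankel_solve \<mu> m (\<lambda>j. \<mu> (m + j)) i)"

lemma monic_orth_coeff_moment_below:
  assumes "det (hankel_mat \<mu> m) \<noteq> 0" "j < m"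
  shows "(\<Sum>i<Suc m. monic_orth_coeff \<mu> m i * \<mu> (i + j)) = 0"
proof -
  have "(\<Sum>i<m. hankel_solve \<mu> m (\<lambda>l. \<mu> (m + l)) i * \<mu> (i + j)) = \<mu> (m + j)"
    using hankel_mult_solve[OF assms, of "\<lambda>l. \<mu> (m + l)"] by (simp add: add.commute mult.commute)
  then show ?thesis
    by (simp add: monic_orth_coeff_def sum_negf add.commute)
qed

lemma monic_orth_coeff_moment_last:
  "(\<Sum>i<Suc m. monic_orth_coeff \<mu> m i * \<mu> (i + m)) = hankel_schur \<mu> m"
  by (simp add: monic_orth_coeff_def hankel_schur_def sum_negf mult_2 mult_2_right add.commute mult.commute)

lemma hankel_schur_eq_quadratic_form:
  assumes "det (hankel_mat \<mu> m) \<noteq> 0"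
  shows "hankel_schur \<mu> m
    = (\<Sum>i<Suc m. \<Sum>j<Suc m. monic_orth_coeff \<mu> m i * monic_orth_coeff \<mu> m j * \<mu> (i + j))"
proof -
  have "(\<Sum>i<Suc m. \<Sum>j<Suc m. monic_orth_coeff \<mu> m i * monic_orth_coeff \<mu> m j * \<mu> (i + j))
      = (\<Sum>j<Suc m. monic_orth_coeff \<mu> m j * (\<Sum>i<Suc m. monic_orth_coeff \<mu> m i * \<mu> (i + j)))"
    by (subst sum.swap) (simp add: sum_distrib_left mult_ac del: sum.lessThan_Suc)
  also have "\<dots> = monic_orth_coeff \<mu> m m * hankel_schur \<mu> m"
    using monic_orth_coeff_moment_below[OF assms] monic_orth_coeff_moment_last[of \<mu> m]
    by (simp add: sum.neutral)
  finally show ?thesis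
    by (simp add: monic_orth_coeff_def)
qed

lemma mat_delete_hankel_mat_last: "mat_delete (hankel_mat \<mu> (Suc m)) m m = hankel_mat \<mu> m"
  unfolding mat_delete_def hankel_mat_def by (intro eq_matI) auto

lemma hankel_inv_last:
  "hankel_inv \<mu> (Suc m) m m = det (hankel_mat \<mu> m) / det (hankel_mat \<mu> (Suc m))"
  by (simp add: hankel_inv_def cofactor_def mat_delete_hankel_mat_last)

lemma det_mat_last_column_single:
  fixes f :: "nat \<Rightarrow> nat \<Rightarrow> 'a::comm_ring_1"
  assumes "\<And>i. i < m \<Longrightarrow> f i m = 0"
  shows "det (mat (Suc m) (Suc m) (\<lambda>(i, j). f i j)) = f m m * det (mat m m (\<lambda>(i, j). f i j))"
proof -
  let ?M = "mat (Suc m) (Suc m) (\<lambda>(i, j). f i j)"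
  have "det ?M = (\<Sum>i<Suc m. ?M $$ (i, m) * cofactor ?M i m)"
    by (rule laplace_expansion_column) auto
  also have "\<dots> = f m m * cofactor ?M m m"
    using assms by simp
  also have "mat_delete ?M m m = mat m m (\<lambda>(i, j). f i j)"
    unfolding mat_delete_def by (intro eq_matI) auto
  then have "cofactor ?M m m = det (mat m m (\<lambda>(i, j). f i j))"
    by (simp add: cofactor_def)
  finally show ?thesis .
qed

text \<open>Subtracting from the last column the combination of the others given by the orthogonal
  polynomial leaves the Schur complement in the corner and zeros above it.\<close>
lemma det_hankel_mat_Suc:
  assumes "det (hankel_mat \<mu> m) \<noteq> 0"
  shows "det (hankel_mat \<mu> (Suc m)) = det (hankel_mat \<mu> m) * hankel_schur \<mu> m"
proof -
  define E where "E = mat (Suc m) (Suc m)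
    (\<lambda>(i, j). if j = m then monic_orth_coeff \<mu> m i else if i = j then 1 else 0)"
  define M where "M = mat (Suc m) (Suc m)
    (\<lambda>(i, j). if j < m then \<mu> (i + j) else if i = m then hankel_schur \<mu> m else 0)"
  have E: "E \<in> carrier_mat (Suc m) (Suc m)" by (simp add: E_def)
  have "det E = 1"
  proof -
    have "det E = prod_list (diag_mat E)"
      by (rule det_upper_triangular[OF _ E]) (auto simp: upper_triangular_def E_def)
    then show ?thesis
      unfolding prod_list_diag_prod by (auto simp: E_def monic_orth_coeff_def intro!: prod.neutral)
  qed
  have "hankel_mat \<mu> (Suc m) * E = M"
  proof (rule eq_matI)
    fix i j assume ij: "i < dim_row M" "j < dim_col M"
    have "(hankel_mat \<mu> (Suc m) * E) $$ (i, j) = (\<Sum>l<Suc m. \<mu> (i + l) * E $$ (l, j))"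
      using ij by (simp add: M_def E_def scalar_prod_def atLeast0LessThan)
    also have "\<dots> = M $$ (i, j)"
    proof (cases "j < m")
      case True
      then show ?thesis using ij by (simp add: M_def E_def if_distrib[of "(*) _"] cong: if_cong)
    next
      case False
      then have "j = m" using ij by (simp add: M_def)
      then have "(\<Sum>l<Suc m. \<mu> (i + l) * E $$ (l, j)) = (\<Sum>l<Suc m. monic_orth_coeff \<mu> m l * \<mu> (l + i))"
        by (intro sum.cong) (auto simp: E_def add.commute mult.commute)
      then show ?thesis
        using ij \<open>j = m\<close> monic_orth_coeff_moment_below[OF assms, of i] monic_orth_coeff_moment_last[of \<mu> m]
        by (auto simp: M_def less_Suc_eq simp del: sum.lessThan_Suc)
    qed
    finally show "(hankel_mat \<mu> (Suc m) * E) $$ (i, j) = M $$ (i, j)" .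
  qed (auto simp: M_def E_def)
  moreover have "det M = hankel_schur \<mu> m * det (hankel_mat \<mu> m)"
    unfolding M_def
    by (subst det_mat_last_column_single) (auto simp: hankel_mat_def intro!: arg_cong[where f = det])
  ultimately show ?thesis
    using det_mult[OF hankel_mat_carrier[of \<mu> "Suc m"] E] \<open>det E = 1\<close> by (simp add: mult.commute)
qed

section \<open>Derivatives of determinants and of the inverse Hankel matrix\<close>

lemma laplace_expansion_replaced_row:
  fixes A :: "nat \<Rightarrow> nat \<Rightarrow> 'a::comm_ring_1"
  assumes "k < n"
  shows "(\<Sum>p | p permutes {0..<n}. signof p * (g (p k) * (\<Prod>i\<in>{0..<n}-{k}. A i (p i))))
       = (\<Sum>j<n. g j * cofactor (mat n n (\<lambda>(i, j). A i j)) k j)"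
proof -
  define R where "R = mat n n (\<lambda>(i, j). if i = k then g j else A i j)"
  have "det R = (\<Sum>p | p permutes {0..<n}. signof p * (\<Prod>i\<in>{0..<n}. R $$ (i, p i)))"
    unfolding det_def R_def by simp
  also have "\<dots> = (\<Sum>p | p permutes {0..<n}. signof p * (g (p k) * (\<Prod>i\<in>{0..<n}-{k}. A i (p i))))"
  proof (rule sum.cong[OF refl])
    fix p assume "p \<in> {p. p permutes {0..<n}}"
    then have p: "p i < n" if "i < n" for i
      using that by (simp add: permutes_in_image)
    have "(\<Prod>i\<in>{0..<n}. R $$ (i, p i)) = R $$ (k, p k) * (\<Prod>i\<in>{0..<n}-{k}. R $$ (i, p i))"
      using assms by (simp add: prod.remove)
    also have "\<dots> = g (p k) * (\<Prod>i\<in>{0..<n}-{k}. A i (p i))"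
      using assms p by (auto simp: R_def intro!: prod.cong)
    finally show "signof p * (\<Prod>i\<in>{0..<n}. R $$ (i, p i))
        = signof p * (g (p k) * (\<Prod>i\<in>{0..<n}-{k}. A i (p i)))" by simp
  qed
  finally have "det R = \<dots>" .
  moreover have "det R = (\<Sum>j<n. R $$ (k, j) * cofactor R k j)"
    by (rule laplace_expansion_row) (use assms in \<open>auto simp: R_def\<close>)
  moreover have "cofactor R k j = cofactor (mat n n (\<lambda>(i, j). A i j)) k j" for j
    unfolding cofactor_def mat_delete_def R_def using assms
    by (intro arg_cong2[where f = "(*)"] arg_cong[where f = det] eq_matI) auto
  ultimately show ?thesis
    using assms by (simp add: R_def)
qed

lemma has_field_derivative_det:
  fixes f :: "'a::real_normed_field \<Rightarrow> nat \<Rightarrow> nat \<Rightarrow> 'a"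
  assumes "\<And>i j. i < n \<Longrightarrow> j < n \<Longrightarrow> ((\<lambda>s. f s i j) has_field_derivative f' i j) (at x)"
  shows "((\<lambda>s. det (mat n n (\<lambda>(i, j). f s i j))) has_field_derivative
           (\<Sum>i<n. \<Sum>j<n. f' i j * cofactor (mat n n (\<lambda>(i, j). f x i j)) i j)) (at x)"
proof -
  define P where "P = {p. p permutes {0..<n}}"
  have det_eq: "(\<lambda>s. det (mat n n (\<lambda>(i, j). f s i j)))
      = (\<lambda>s. \<Sum>p\<in>P. signof p * (\<Prod>i\<in>{0..<n}. f s i (p i)))"
    unfolding det_def P_def by (auto intro!: sum.cong prod.cong simp: permutes_in_image)
  have "((\<lambda>s. \<Sum>p\<in>P. signof p * (\<Prod>i\<in>{0..<n}. f s i (p i))) has_field_derivative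
      (\<Sum>p\<in>P. signof p * (\<Sum>k\<in>{0..<n}. f' k (p k) * (\<Prod>i\<in>{0..<n}-{k}. f x i (p i))))) (at x)"
    by (intro DERIV_sum DERIV_cmult has_field_derivative_prod assms)
       (auto simp: P_def permutes_in_image)
  also have "(\<Sum>p\<in>P. signof p * (\<Sum>k\<in>{0..<n}. f' k (p k) * (\<Prod>i\<in>{0..<n}-{k}. f x i (p i))))
      = (\<Sum>k<n. \<Sum>p\<in>P. signof p * (f' k (p k) * (\<Prod>i\<in>{0..<n}-{k}. f x i (p i))))"
    by (subst sum.swap) (simp add: sum_distrib_left atLeast0LessThan)
  also have "\<dots> = (\<Sum>k<n. \<Sum>j<n. f' k j * cofactor (mat n n (\<lambda>(i, j). f x i j)) k j)"
    unfolding P_def by (intro sum.cong refl laplace_expansion_replaced_row) simp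
  finally show ?thesis
    unfolding det_eq .
qed

lemma has_field_derivative_det_hankel_mat:
  fixes \<mu> :: "'a::real_normed_field \<Rightarrow> nat \<Rightarrow> 'a"
  assumes "\<And>k. ((\<lambda>s. \<mu> s k) has_field_derivative \<mu>' k) (at t)"
    and "det (hankel_mat (\<mu> t) m) \<noteq> 0"
  shows "((\<lambda>s. det (hankel_mat (\<mu> s) m)) has_field_derivative
           det (hankel_mat (\<mu> t) m) * (\<Sum>i<m. \<Sum>j<m. \<mu>' (i + j) * hankel_inv (\<mu> t) m i j)) (at t)"
proof -
  have "((\<lambda>s. det (hankel_mat (\<mu> s) m)) has_field_derivative
      (\<Sum>i<m. \<Sum>j<m. \<mu>' (i + j) * cofactor (hankel_mat (\<mu> t) m) i j)) (at t)"
    unfolding hankel_mat_def by (rule has_field_derivative_det) (rule assms(1))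
  moreover have "cofactor (hankel_mat (\<mu> t) m) i j = det (hankel_mat (\<mu> t) m) * hankel_inv (\<mu> t) m i j" for i j
    using assms(2) by (simp add: hankel_inv_def cofactor_hankel_mat_commute[of _ m i j])
  ultimately show ?thesis
    by (simp add: sum_distrib_left mult.left_commute)
qed

lemma mat_delete_hankel_mat:
  "mat_delete (hankel_mat \<mu> m) i j
    = mat (m - 1) (m - 1) (\<lambda>(p, q). \<mu> ((if p < i then p else Suc p) + (if q < j then q else Suc q)))"
  unfolding mat_delete_def by (intro eq_matI) (auto simp: hankel_mat_def)

lemma hankel_inv_differentiable:
  fixes \<mu> :: "real \<Rightarrow> nat \<Rightarrow> real"
  assumes \<mu>': "\<And>k. ((\<lambda>s. \<mu> s k) has_real_derivative \<mu>' k) (at t)"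
    and det: "det (hankel_mat (\<mu> t) m) \<noteq> 0"
  shows "(\<lambda>s. hankel_inv (\<mu> s) m i j) differentiable (at t)"
proof -
  define f where "f s p q = \<mu> s ((if p < j then p else Suc p) + (if q < i then q else Suc q))" for s p q
  have "((\<lambda>s. det (mat (m - 1) (m - 1) (\<lambda>(p, q). f s p q))) has_real_derivative
      (\<Sum>p<m - 1. \<Sum>q<m - 1. \<mu>' ((if p < j then p else Suc p) + (if q < i then q else Suc q))
         * cofactor (mat (m - 1) (m - 1) (\<lambda>(p, q). f t p q)) p q)) (at t)"
    unfolding f_def by (rule has_field_derivative_det) (rule \<mu>')
  then have "((\<lambda>s. cofactor (hankel_mat (\<mu> s) m) j i) has_real_derivative
      (-1) ^ (j + i) * (\<Sum>p<m - 1. \<Sum>q<m - 1. \<mu>' ((if p < j then p else Suc p) + (if q < i then q else Suc q))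
         * cofactor (mat (m - 1) (m - 1) (\<lambda>(p, q). f t p q)) p q)) (at t)"
    unfolding cofactor_def mat_delete_hankel_mat f_def by (rule DERIV_cmult)
  from DERIV_divide[OF this has_field_derivative_det_hankel_mat[OF \<mu>' det] det] show ?thesis
    unfolding hankel_inv_def real_differentiable_def by blast
qed

text \<open>Differentiating the identity K H = I gives K' = - K H' K.\<close>
lemma hankel_inv_has_real_derivative:
  fixes \<mu> :: "real \<Rightarrow> nat \<Rightarrow> real"
  assumes \<mu>': "\<And>k. ((\<lambda>s. \<mu> s k) has_real_derivative \<mu>' k) (at t)"
    and det: "det (hankel_mat (\<mu> t) m) \<noteq> 0" and ij: "i < m" "j < m"
  shows "((\<lambda>s. hankel_inv (\<mu> s) m i j) has_real_derivative
      - (\<Sum>l<m. \<Sum>p<m. hankel_inv (\<mu> t) m i l * \<mu>' (l + p) * hankel_inv (\<mu> t) m p j)) (at t)"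
proof -
  let ?K = "hankel_inv (\<mu> t) m"
  define K' where "K' l = deriv (\<lambda>s. hankel_inv (\<mu> s) m i l) t" for l
  have K': "((\<lambda>s. hankel_inv (\<mu> s) m i l) has_real_derivative K' l) (at t)" for l
    unfolding K'_def DERIV_deriv_iff_real_differentiable by (rule hankel_inv_differentiable[OF \<mu>' det])
  have "\<forall>\<^sub>F s in at t. det (hankel_mat (\<mu> s) m) \<noteq> 0"
    using DERIV_isCont[OF has_field_derivative_det_hankel_mat[OF \<mu>' det]] det
    unfolding isCont_def by (rule tendsto_imp_eventually_ne)
  then have ev: "\<forall>\<^sub>F s in at t. (\<Sum>l<m. hankel_inv (\<mu> s) m i l * \<mu> s (l + q)) = (if i = q then 1 else 0)"
    if "q < m" for q
    by eventually_elim (rule hankel_inv_left[OF _ ij(1) that])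
  have K'_hankel: "(\<Sum>l<m. K' l * \<mu> t (l + q)) = - (\<Sum>l<m. ?K i l * \<mu>' (l + q))" if "q < m" for q
  proof -
    have "((\<lambda>s. \<Sum>l<m. hankel_inv (\<mu> s) m i l * \<mu> s (l + q)) has_real_derivative
        (\<Sum>l<m. K' l * \<mu> t (l + q) + ?K i l * \<mu>' (l + q))) (at t)"
      by (intro DERIV_sum DERIV_cong[OF DERIV_mult[OF K' \<mu>']]) (simp add: mult.commute)
    moreover have "((\<lambda>s. \<Sum>l<m. hankel_inv (\<mu> s) m i l * \<mu> s (l + q)) has_real_derivative 0) (at t)"
      using has_field_derivative_cong_eventually[OF ev[OF that]] hankel_inv_left[OF det ij(1) that]
      by simp
    ultimately show ?thesis
      by (simp add: DERIV_unique sum.distrib eq_neg_iff_add_eq_0)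
  qed
  have "K' j = (\<Sum>l<m. K' l * (\<Sum>q<m. \<mu> t (l + q) * ?K q j))"
    using hankel_inv_right[OF det _ ij(2)] ij(2) by (simp add: if_distrib[of "(*) _"] cong: if_cong)
  also have "\<dots> = (\<Sum>q<m. (\<Sum>l<m. K' l * \<mu> t (l + q)) * ?K q j)"
    by (simp add: sum_distrib_left sum_distrib_right mult.assoc) (rule sum.swap)
  also have "\<dots> = - (\<Sum>l<m. \<Sum>q<m. ?K i l * \<mu>' (l + q) * ?K q j)"
    by (simp add: K'_hankel sum_distrib_right sum_negf) (rule sum.swap)
  finally show ?thesis
    using K'[of j] by simp
qed

section \<open>The algebraic identity behind the theorem\<close>

lemma sum_lessThan_odd_plus: "(\<Sum>i<k. 2 * real i + x + 1) = real k * (real k + x)"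
  by (induction k) (simp_all add: algebra_simps)

text \<open>The recurrence is all the algebra needs to know about the moments.
  Each pair of lemmas below evaluates one bilinear form in the shifted moments \<mu> (i + j + 1) twice:
  directly through K H = H K = I, and through the recurrence.\<close>
locale hankel_recurrence =
  fixes \<mu> :: "nat \<Rightarrow> real" and \<alpha> c s :: real and n :: nat
  assumes recurrence: "\<And>k. \<mu> (Suc k) = (real k + \<alpha> + 1) * \<mu> k - c * s ^ k"
    and det_nonzero: "det (hankel_mat \<mu> n) \<noteq> 0"
    and pos: "0 < n"
begin

abbreviation K where "K \<equiv> hankel_inv \<mu> n"
abbreviation u where "u \<equiv> hankel_solve \<mu> n (\<lambda>i. s ^ i)"
abbreviation q where "q \<equiv> hankel_solve \<mu> n (\<lambda>i. \<mu> (n + i))"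
abbreviation a where "a \<equiv> \<Sum>i<n. s ^ i * u i"
abbreviation b where "b \<equiv> \<Sum>i<n. real i * s ^ i * u i"
abbreviation P where "P \<equiv> \<Sum>i<Suc n. monic_orth_coeff \<mu> n i * s ^ i"

lemma K_left: "i < n \<Longrightarrow> j < n \<Longrightarrow> (\<Sum>l<n. K i l * \<mu> (l + j)) = (if i = j then 1 else 0)"
  and K_right: "i < n \<Longrightarrow> j < n \<Longrightarrow> (\<Sum>l<n. \<mu> (i + l) * K l j) = (if i = j then 1 else 0)"
  and mult_u: "i < n \<Longrightarrow> (\<Sum>j<n. \<mu> (i + j) * u j) = s ^ i"
  using hankel_inv_left hankel_inv_right hankel_mult_solve det_nonzero by blast+

lemma P_eq: "P = s ^ n - (\<Sum>i<n. q i * s ^ i)"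
  by (simp add: monic_orth_coeff_def sum_negf)

lemma shifted_trace_direct: "(\<Sum>j<n. \<Sum>i<n. K j i * \<mu> (i + Suc j)) = q (n - 1)"
proof -
  obtain m where n: "n = Suc m" using pos by (cases n) auto
  have "(\<Sum>i<n. K j i * \<mu> (i + Suc j)) = 0" if "j < m" for j
    using K_left[of j "Suc j"] that n by simp
  then have "(\<Sum>j<n. \<Sum>i<n. K j i * \<mu> (i + Suc j)) = (\<Sum>i<n. K m i * \<mu> (i + n))"
    by (simp add: n)
  then show ?thesis
    by (simp add: n hankel_solve_def add.commute)
qed

lemma shifted_trace_recurrence:
  "(\<Sum>j<n. \<Sum>i<n. K j i * \<mu> (i + Suc j)) = real n * (real n + \<alpha>) - c * a"
proof -
  have "(\<Sum>j<n. \<Sum>i<n. K j i * \<mu> (i + Suc j))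
      = (\<Sum>j<n. \<Sum>i<n. real i * (\<mu> (i + j) * K j i) + (real j + \<alpha> + 1) * (K j i * \<mu> (i + j))
                 - c * (s ^ j * (K j i * s ^ i)))"
    unfolding add_Suc_right recurrence by (simp add: algebra_simps power_add)
  also have "\<dots> = (\<Sum>i<n. real i * (\<Sum>j<n. \<mu> (i + j) * K j i))
      + (\<Sum>j<n. (real j + \<alpha> + 1) * (\<Sum>i<n. K j i * \<mu> (i + j))) - c * a"
    by (simp add: sum_subtractf sum.distrib sum_distrib_left hankel_solve_def)
       (subst (2) sum.swap, simp add: sum_distrib_left)
  also have "(\<Sum>i<n. real i * (\<Sum>j<n. \<mu> (i + j) * K j i)) = (\<Sum>i<n. real i)"
    using K_right by (intro sum.cong refl) simp
  also have "(\<Sum>j<n. (real j + \<alpha> + 1) * (\<Sum>i<n. K j i * \<mu> (i + j))) = (\<Sum>j<n. real j + \<alpha> + 1)"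
    using K_left by (intro sum.cong refl) simp
  also have "(\<Sum>i<n. real i) + (\<Sum>j<n. real j + \<alpha> + 1) = real n * (real n + \<alpha>)"
    using sum_lessThan_odd_plus[of \<alpha> n] by (simp add: sum.distrib[symmetric] algebra_simps)
  finally show ?thesis .
qed

lemma shifted_form_u_direct: "(\<Sum>i<n. \<Sum>j<n. u i * u j * \<mu> (Suc i + j)) = s * a - u (n - 1) * P"
proof -
  obtain m where n: "n = Suc m" using pos by (cases n) auto
  have "(\<Sum>i<n. \<Sum>j<n. u i * u j * \<mu> (Suc i + j))
      = (\<Sum>i<m. u i * (\<Sum>j<n. \<mu> (Suc i + j) * u j)) + u m * (\<Sum>j<n. \<mu> (n + j) * u j)"
    unfolding n by (simp add: sum_distrib_left distrib_left mult_ac)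
  also have "(\<Sum>i<m. u i * (\<Sum>j<n. \<mu> (Suc i + j) * u j)) = (\<Sum>i<m. u i * s ^ Suc i)"
  proof (intro sum.cong refl)
    fix i assume "i \<in> {..<m}"
    then have "Suc i < n" using n by simp
    then show "u i * (\<Sum>j<n. \<mu> (Suc i + j) * u j) = u i * s ^ Suc i"
      by (simp only: mult_u)
  qed
  also have "\<dots> = s * (a - s ^ m * u m)"
    by (simp add: n sum_distrib_left mult_ac)
  also have "(\<Sum>j<n. \<mu> (n + j) * u j) = (\<Sum>i<n. q i * s ^ i)"
    using hankel_solve_dot_commute[of "\<lambda>j. \<mu> (n + j)" \<mu> n "\<lambda>i. s ^ i"] by (simp add: mult.commute)
  finally show ?thesis
    unfolding P_eq by (simp add: n algebra_simps)
qed

lemma shifted_form_u_recurrence: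
  "(\<Sum>i<n. \<Sum>j<n. u i * u j * \<mu> (Suc i + j)) = 2 * b + (\<alpha> + 1) * a - c * a\<^sup>2"
proof -
  have "(\<Sum>i<n. \<Sum>j<n. u i * u j * \<mu> (Suc i + j))
      = (\<Sum>i<n. \<Sum>j<n. real i * u i * (\<mu> (i + j) * u j) + real j * u j * (\<mu> (j + i) * u i)
              + (\<alpha> + 1) * (u i * (\<mu> (i + j) * u j)) - c * ((s ^ i * u i) * (s ^ j * u j)))"
    unfolding add_Suc recurrence by (intro sum.cong refl) (simp add: algebra_simps power_add)
  also have "\<dots> = (\<Sum>i<n. \<Sum>j<n. real i * u i * (\<mu> (i + j) * u j))
      + (\<Sum>i<n. \<Sum>j<n. real j * u j * (\<mu> (j + i) * u i))
      + (\<alpha> + 1) * (\<Sum>i<n. \<Sum>j<n. u i * (\<mu> (i + j) * u j))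
      - c * (\<Sum>i<n. \<Sum>j<n. (s ^ i * u i) * (s ^ j * u j))"
    by (simp add: sum.distrib sum_subtractf sum_distrib_left)
  also have "(\<Sum>i<n. \<Sum>j<n. real j * u j * (\<mu> (j + i) * u i))
      = (\<Sum>i<n. \<Sum>j<n. real i * u i * (\<mu> (i + j) * u j))"
    by (rule sum.swap)
  also have "(\<Sum>i<n. \<Sum>j<n. (s ^ i * u i) * (s ^ j * u j)) = a\<^sup>2"
    by (simp add: power2_eq_square sum_product)
  also have "(\<Sum>i<n. \<Sum>j<n. real i * u i * (\<mu> (i + j) * u j))
      = (\<Sum>i<n. real i * u i * (\<Sum>j<n. \<mu> (i + j) * u j))"
    by (simp add: sum_distrib_left)
  also have "(\<Sum>i<n. \<Sum>j<n. u i * (\<mu> (i + j) * u j)) = (\<Sum>i<n. u i * (\<Sum>j<n. \<mu> (i + j) * u j))"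
    by (simp add: sum_distrib_left)
  also have "(\<Sum>i<n. real i * u i * (\<Sum>j<n. \<mu> (i + j) * u j)) = b"
    using mult_u by (auto intro!: sum.cong simp: mult_ac)
  also have "(\<Sum>i<n. u i * (\<Sum>j<n. \<mu> (i + j) * u j)) = a"
    using mult_u by (auto intro!: sum.cong simp: mult_ac)
  finally show ?thesis
    by simp
qed

lemma shifted_form_orth_direct:
  "(\<Sum>i<Suc n. \<Sum>j<n. monic_orth_coeff \<mu> n i * K j (n - 1) * \<mu> (i + Suc j))
    = K (n - 1) (n - 1) * hankel_schur \<mu> n"
proof -
  obtain m where n: "n = Suc m" and m: "n - 1 = m" using pos by (cases n) auto
  define X where "X j = (\<Sum>i<Suc n. monic_orth_coeff \<mu> n i * \<mu> (i + j))" for j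
  have X_below: "X j = 0" if "j < n" for j
    unfolding X_def by (rule monic_orth_coeff_moment_below[OF det_nonzero that])
  have "(\<Sum>i<Suc n. \<Sum>j<n. monic_orth_coeff \<mu> n i * K j m * \<mu> (i + Suc j)) = (\<Sum>j<n. K j m * X (Suc j))"
    unfolding X_def by (subst sum.swap) (simp add: sum_distrib_left distrib_left mult_ac)
  also have "\<dots> = (\<Sum>j<m. K j m * X (Suc j)) + K m m * X n"
    by (simp add: n)
  also have "(\<Sum>j<m. K j m * X (Suc j)) = 0"
    using X_below n by simp
  also have "X n = hankel_schur \<mu> n"
    unfolding X_def by (rule monic_orth_coeff_moment_last)
  finally show ?thesis
    by (simp only: m add_0)
qed

lemma shifted_form_orth_recurrence:
  "(\<Sum>i<Suc n. \<Sum>j<n. monic_orth_coeff \<mu> n i * K j (n - 1) * \<mu> (i + Suc j))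
    = q (n - 1) - c * P * u (n - 1)"
proof -
  obtain m where n: "n = Suc m" and m: "n - 1 = m" using pos by (cases n) auto
  let ?x = "monic_orth_coeff \<mu> n"
  have "(\<Sum>i<Suc n. \<Sum>j<n. ?x i * K j m * \<mu> (i + Suc j))
      = (\<Sum>i<Suc n. \<Sum>j<n. real i * ?x i * (\<mu> (i + j) * K j m)
          + (real j + \<alpha> + 1) * K j m * (?x i * \<mu> (i + j)) - c * ((?x i * s ^ i) * (K j m * s ^ j)))"
    unfolding add_Suc_right recurrence by (intro sum.cong refl) (simp add: algebra_simps power_add)
  also have "\<dots> = (\<Sum>i<Suc n. \<Sum>j<n. real i * ?x i * (\<mu> (i + j) * K j m))
      + (\<Sum>i<Suc n. \<Sum>j<n. (real j + \<alpha> + 1) * K j m * (?x i * \<mu> (i + j)))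
      - c * (\<Sum>i<Suc n. \<Sum>j<n. (?x i * s ^ i) * (K j m * s ^ j))"
    by (simp add: sum.distrib sum_subtractf sum_distrib_left del: sum.lessThan_Suc)
  also have "(\<Sum>i<Suc n. \<Sum>j<n. real i * ?x i * (\<mu> (i + j) * K j m))
      = (\<Sum>i<Suc n. real i * ?x i * (\<Sum>j<n. \<mu> (i + j) * K j m))"
    by (simp add: sum_distrib_left del: sum.lessThan_Suc)
  also have "(\<Sum>i<Suc n. \<Sum>j<n. (real j + \<alpha> + 1) * K j m * (?x i * \<mu> (i + j)))
      = (\<Sum>j<n. (real j + \<alpha> + 1) * K j m * (\<Sum>i<Suc n. ?x i * \<mu> (i + j)))"
    by (subst sum.swap) (simp add: sum_distrib_left del: sum.lessThan_Suc)
  also have "(\<Sum>i<Suc n. \<Sum>j<n. (?x i * s ^ i) * (K j m * s ^ j)) = P * (\<Sum>j<n. K j m * s ^ j)"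
    by (simp only: sum_product)
  also have "(\<Sum>j<n. (real j + \<alpha> + 1) * K j m * (\<Sum>i<Suc n. ?x i * \<mu> (i + j))) = 0"
    using monic_orth_coeff_moment_below[OF det_nonzero] by simp
  also have "(\<Sum>j<n. K j m * s ^ j) = u m"
    by (simp add: hankel_solve_def hankel_inv_sym[of \<mu> n m])
  also have "(\<Sum>i<Suc n. real i * ?x i * (\<Sum>j<n. \<mu> (i + j) * K j m)) = q m"
  proof -
    have "(\<Sum>i<n. real i * ?x i * (\<Sum>j<n. \<mu> (i + j) * K j m)) = real m * ?x m"
      using K_right n by (simp add: if_distrib[of "(*) _"] cong: if_cong)
    moreover have "(\<Sum>j<n. \<mu> (n + j) * K j m) = q m"
      by (simp add: hankel_solve_def hankel_inv_sym[of \<mu> n m] mult.commute)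
    moreover have "?x m = - q m" and "?x n = 1" and "real n = real m + 1"
      using n by (simp_all add: monic_orth_coeff_def)
    ultimately show ?thesis
      by (simp add: algebra_simps)
  qed
  finally show ?thesis
    by (simp only: m mult.assoc diff_0_right add_0)
qed

lemma scaled_second_log_derivative_identity:
  "c * (\<alpha> - s) * a + c * (2 * b - c * a\<^sup>2)
     = - real n * (real n + \<alpha>) + hankel_schur \<mu> n * K (n - 1) (n - 1)"
proof -
  have "2 * b + (\<alpha> + 1) * a - c * a\<^sup>2 = s * a - u (n - 1) * P"
    using shifted_form_u_direct shifted_form_u_recurrence by simp
  then have b_eq: "2 * b - c * a\<^sup>2 = (s - \<alpha> - 1) * a - u (n - 1) * P"
    by (simp add: left_diff_distrib distrib_right)
  have "c * (\<alpha> - s) * a + c * (2 * b - c * a\<^sup>2) = - c * a - c * P * u (n - 1)"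
    unfolding b_eq by (simp add: algebra_simps)
  also have "\<dots> = K (n - 1) (n - 1) * hankel_schur \<mu> n - real n * (real n + \<alpha>)"
  proof -
    have "q (n - 1) = real n * (real n + \<alpha>) - c * a"
      using shifted_trace_direct shifted_trace_recurrence by simp
    moreover have "K (n - 1) (n - 1) * hankel_schur \<mu> n = q (n - 1) - c * P * u (n - 1)"
      using shifted_form_orth_direct shifted_form_orth_recurrence by simp
    ultimately show ?thesis
      by (simp add: algebra_simps)
  qed
  finally show ?thesis
    by (simp add: mult.commute)
qed

end

section \<open>Moments of the weight\<close>

definition gamma_integrand :: "real \<Rightarrow> real \<Rightarrow> real" where
  "gamma_integrand p x = x powr p * exp (- x)"

text \<open>In the usual notation, lower_gamma p s is the lower incomplete gamma function at p + 1.\<close>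
definition lower_gamma :: "real \<Rightarrow> real \<Rightarrow> real" where
  "lower_gamma p s = integral {0..s} (gamma_integrand p)"

lemma gamma_integrand_continuous_on:
  assumes "p > 0" "a \<ge> 0"
  shows "continuous_on {a..b} (gamma_integrand p)"
  unfolding gamma_integrand_def using assms
  by (intro continuous_intros continuous_on_powr') auto

lemma gamma_integrand_Gamma:
  assumes "p > -1"
  shows "set_integrable lborel {0..} (gamma_integrand p)"
    and "(LBINT x:{0..}. gamma_integrand p x) = Gamma (p + 1)"
proof -
  have "((\<lambda>t. t powr (p + 1 - 1) / exp t) has_integral Gamma (p + 1)) {0..}"
    by (rule Gamma_integral_real) (use assms in auto)
  moreover have "(\<lambda>t. t powr (p + 1 - 1) / exp t) = gamma_integrand p"
    by (rule ext) (simp add: gamma_integrand_def exp_minus divide_inverse)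
  ultimately have hi: "(gamma_integrand p has_integral Gamma (p + 1)) {0..}"
    by simp
  then have "gamma_integrand p absolutely_integrable_on {0..}"
    by (intro nonnegative_absolutely_integrable_1) (auto simp: gamma_integrand_def)
  then show si: "set_integrable lborel {0..} (gamma_integrand p)"
    unfolding set_integrable_def
    by (subst (asm) integrable_completion) (auto simp: gamma_integrand_def)
  show "(LBINT x:{0..}. gamma_integrand p x) = Gamma (p + 1)"
    using set_borel_integral_eq_integral(2)[OF si] hi by (simp add: integral_unique)
qed

lemma lower_gamma_has_real_derivative:
  assumes "p > 0" "s > 0"
  shows "(lower_gamma p has_real_derivative gamma_integrand p s) (at s)"
proof -
  have "((\<lambda>x. integral {0..x} (gamma_integrand p)) has_real_derivative gamma_integrand p s)
      (at s within {0..s + 1})"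
    by (rule integral_has_real_derivative[OF gamma_integrand_continuous_on]) (use assms in auto)
  moreover have "at s within {0..s + 1} = at s"
    by (rule at_within_Icc_at) (use assms in auto)
  ultimately show ?thesis
    by (simp add: lower_gamma_def[abs_def])
qed

text \<open>Integration by parts, with s^(p+1) e^(-s) as the boundary term.\<close>
lemma lower_gamma_plus_one:
  assumes "p > 0" "s \<ge> 0"
  shows "lower_gamma (p + 1) s = (p + 1) * lower_gamma p s - s powr (p + 1) * exp (- s)"
proof -
  define F where "F x = x powr (p + 1) * exp (- x)" for x :: real
  define F' where "F' x = (p + 1) * gamma_integrand p x - gamma_integrand (p + 1) x" for x :: real
  have "(F' has_integral (F s - F 0)) {0..s}"
  proof (rule fundamental_theorem_of_calculus_interior)
    show "continuous_on {0..s} F"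
      unfolding F_def using assms by (intro continuous_intros continuous_on_powr') auto
    fix x assume "x \<in> {0<..<s}"
    then have x: "x > 0" by simp
    have "(F has_real_derivative
        (p + 1) * x powr (p + 1 - 1) * exp (- x) + x powr (p + 1) * (exp (- x) * (- 1))) (at x)"
      unfolding F_def by (intro derivative_eq_intros has_real_derivative_powr[OF x]) (use x in auto)
    then show "(F has_vector_derivative F' x) (at x)"
      by (simp add: F'_def gamma_integrand_def algebra_simps has_real_derivative_iff_has_vector_derivative)
  qed (use assms in auto)
  then have "integral {0..s} F' = F s"
    by (simp add: integral_unique F_def)
  moreover have "integral {0..s} F' = (p + 1) * lower_gamma p s - lower_gamma (p + 1) s"
    unfolding F'_def lower_gamma_def using assms
    by (simp add: integral_diff integrable_continuous_interval gamma_integrand_continuous_on)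
  ultimately show ?thesis
    by (simp add: F_def)
qed

lemma moment_integrand_eq:
  "indicator {0..} x * (x ^ k * weight \<alpha> A B s x)
    = (A + B) * (indicator {0..} x * gamma_integrand (\<alpha> + real k) x)
      - B * (indicator {0..s} x * gamma_integrand (\<alpha> + real k) x)"
proof (cases "x > 0")
  case True
  then have "x ^ k * weight \<alpha> A B s x = gamma_integrand (\<alpha> + real k) x * (A + B * heaviside (x - s))"
    by (simp add: weight_def gamma_integrand_def powr_add powr_realpow mult_ac)
  then show ?thesis
    by (auto simp: heaviside_def indicator_def algebra_simps)
qed (auto simp: indicator_def weight_def gamma_integrand_def)

lemma moment_integrable:
  assumes "\<alpha> > -1"
  shows "integrable lborel (\<lambda>x. indicator {0..} x * (x ^ k * weight \<alpha> A B s x))"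
proof -
  have "set_integrable lborel {0..s} (gamma_integrand (\<alpha> + real k))"
    by (rule set_integrable_subset[OF gamma_integrand_Gamma(1)]) (use assms in auto)
  then show ?thesis
    unfolding moment_integrand_eq
    using gamma_integrand_Gamma(1)[of "\<alpha> + real k"] assms by (simp add: set_integrable_def)
qed

lemma moment_eq_Gamma:
  assumes "\<alpha> > -1"
  shows "moment \<alpha> A B s k = (A + B) * Gamma (\<alpha> + real k + 1) - B * lower_gamma (\<alpha> + real k) s"
proof -
  have I: "set_integrable lborel {0..} (gamma_integrand (\<alpha> + real k))"
    using gamma_integrand_Gamma(1) assms by simp
  have J: "set_integrable lborel {0..s} (gamma_integrand (\<alpha> + real k))"
    by (rule set_integrable_subset[OF I]) auto
  have "moment \<alpha> A B s k = integral\<^sup>L lborel (\<lambda>x.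
      (A + B) * (indicator {0..} x * gamma_integrand (\<alpha> + real k) x)
      - B * (indicator {0..s} x * gamma_integrand (\<alpha> + real k) x))"
    by (simp add: moment_def set_lebesgue_integral_def moment_integrand_eq)
  also have "\<dots> = (A + B) * (LBINT x:{0..}. gamma_integrand (\<alpha> + real k) x)
      - B * (LBINT x:{0..s}. gamma_integrand (\<alpha> + real k) x)"
    using I J by (simp add: set_integrable_def set_lebesgue_integral_def)
  also have "(LBINT x:{0..}. gamma_integrand (\<alpha> + real k) x) = Gamma (\<alpha> + real k + 1)"
    using gamma_integrand_Gamma(2) assms by simp
  also have "(LBINT x:{0..s}. gamma_integrand (\<alpha> + real k) x) = lower_gamma (\<alpha> + real k) s"
    unfolding lower_gamma_def by (rule set_borel_integral_eq_integral(2)[OF J])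
  finally show ?thesis .
qed

lemma moment_Suc:
  assumes "\<alpha> > 0" "s \<ge> 0"
  shows "moment \<alpha> A B s (Suc k)
    = (real k + \<alpha> + 1) * moment \<alpha> A B s k + B * s powr (\<alpha> + real k + 1) * exp (- s)"
proof -
  have Gamma: "Gamma (\<alpha> + real k + 1 + 1) = (\<alpha> + real k + 1) * Gamma (\<alpha> + real k + 1)"
    using assms by (intro Gamma_plus1) (auto simp: nonpos_Ints_def)
  have "moment \<alpha> A B s (Suc k)
      = (A + B) * Gamma (\<alpha> + real k + 1 + 1) - B * lower_gamma (\<alpha> + real k + 1) s"
    using assms by (simp add: moment_eq_Gamma add_ac)
  also have "\<dots> = (A + B) * ((\<alpha> + real k + 1) * Gamma (\<alpha> + real k + 1))
      - B * ((\<alpha> + real k + 1) * lower_gamma (\<alpha> + real k) s - s powr (\<alpha> + real k + 1) * exp (- s))"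
    using assms by (simp only: Gamma lower_gamma_plus_one)
  also have "\<dots> = (real k + \<alpha> + 1) * moment \<alpha> A B s k + B * s powr (\<alpha> + real k + 1) * exp (- s)"
    using assms by (simp add: moment_eq_Gamma algebra_simps)
  finally show ?thesis .
qed

lemma moment_has_real_derivative:
  assumes "\<alpha> > 0" "s > 0"
  shows "((\<lambda>u. moment \<alpha> A B u k) has_real_derivative - B * s powr \<alpha> * exp (- s) * s ^ k) (at s)"
proof -
  have "((\<lambda>u. (A + B) * Gamma (\<alpha> + real k + 1) - B * lower_gamma (\<alpha> + real k) u)
      has_real_derivative - B * gamma_integrand (\<alpha> + real k) s) (at s)"
    using assms by (auto intro!: derivative_eq_intros lower_gamma_has_real_derivative)
  moreover have "gamma_integrand (\<alpha> + real k) s = s powr \<alpha> * exp (- s) * s ^ k"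
    using assms by (simp add: gamma_integrand_def powr_add powr_realpow mult_ac)
  ultimately show ?thesis
    using assms by (simp add: moment_eq_Gamma mult.assoc)
qed

lemma hankelD_eq_det: "hankelD \<alpha> A B n s = det (hankel_mat (moment \<alpha> A B s) n)"
  by (simp add: hankelD_def hankel_mat_def)

section \<open>Positivity of the Hankel determinants\<close>

lemma moment_quadratic_form:
  fixes \<alpha> A B s :: real and y :: "nat \<Rightarrow> real" and N :: nat
  assumes "\<alpha> > -1"
  defines "f \<equiv> \<lambda>x. indicator {0..} x * ((\<Sum>i<N. y i * x ^ i)\<^sup>2 * weight \<alpha> A B s x)"
  shows "integrable lborel f"
    and "(\<Sum>i<N. \<Sum>j<N. y i * y j * moment \<alpha> A B s (i + j)) = integral\<^sup>L lborel f"
proof -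
  have f_eq: "f = (\<lambda>x. \<Sum>i<N. \<Sum>j<N. y i * y j * (indicator {0..} x * (x ^ (i + j) * weight \<alpha> A B s x)))"
    unfolding f_def
    by (rule ext) (simp add: power2_eq_square sum_product sum_distrib_left sum_distrib_right power_add mult_ac)
  show "integrable lborel f"
    unfolding f_eq using moment_integrable[OF assms(1)] by (intro Bochner_Integration.integrable_sum integrable_mult_right)
  show "(\<Sum>i<N. \<Sum>j<N. y i * y j * moment \<alpha> A B s (i + j)) = integral\<^sup>L lborel f"
    unfolding f_eq using moment_integrable[OF assms(1)]
    by (simp add: integrable_sum moment_def set_lebesgue_integral_def)
qed

lemma monic_poly_ge_one:
  fixes y :: "nat \<Rightarrow> real"
  assumes "y N = 1" "x \<ge> 1 + (\<Sum>i<N. \<bar>y i\<bar>)"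
  shows "(\<Sum>i<Suc N. y i * x ^ i) \<ge> 1"
proof (cases N)
  case 0
  then show ?thesis using assms by simp
next
  case (Suc M)
  have "0 \<le> (\<Sum>i<N. \<bar>y i\<bar>)"
    by (simp add: sum_nonneg)
  then have x1: "x \<ge> 1"
    using assms(2) by linarith
  have "- (\<Sum>i<N. y i * x ^ i) \<le> (\<Sum>i<N. \<bar>y i\<bar> * x ^ M)"
    unfolding sum_negf[symmetric]
  proof (rule sum_mono)
    fix i assume "i \<in> {..<N}"
    then have "x ^ i \<le> x ^ M"
      using Suc x1 by (intro power_increasing) auto
    moreover have "- (y i * x ^ i) \<le> \<bar>y i\<bar> * x ^ i"
      using x1 abs_ge_minus_self[of "y i * x ^ i"] by (simp add: abs_mult)
    ultimately show "- (y i * x ^ i) \<le> \<bar>y i\<bar> * x ^ M"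
      by (meson abs_ge_zero mult_left_mono order_trans)
  qed
  also have "\<dots> \<le> (x - 1) * x ^ M"
    using assms(2) x1 by (simp add: sum_distrib_right[symmetric] mult_right_mono)
  finally have "- (\<Sum>i<N. y i * x ^ i) \<le> (x - 1) * x ^ M" .
  moreover have "1 \<le> x ^ M"
    using x1 by simp
  ultimately show ?thesis
    using assms(1) Suc by (simp add: algebra_simps)
qed

lemma weight_nonneg:
  assumes "A \<ge> 0" "B \<ge> 0"
  shows "weight \<alpha> A B s x \<ge> 0"
  using assms by (simp add: weight_def heaviside_def)

lemma weight_ge_exp:
  assumes "\<alpha> \<ge> 0" "A \<ge> 0" "B \<ge> 0" "x \<ge> 1" "x > s"
  shows "weight \<alpha> A B s x \<ge> B * exp (- x)"
proof -
  have "1 * (exp (- x) * B) \<le> x powr \<alpha> * (exp (- x) * (A + B))"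
    using assms by (intro mult_mono ge_one_powr_ge_zero) auto
  then show ?thesis
    using assms(5) by (simp add: weight_def heaviside_def mult_ac)
qed

text \<open>The integrand is at least B e^(-X-1) on [X, X+1], where X is beyond the jump of the weight
  and beyond the region where the monic polynomial can be small.\<close>
lemma moment_quadratic_form_pos:
  assumes "\<alpha> > 0" "A \<ge> 0" "B > 0" "y N = 1"
  shows "(\<Sum>i<Suc N. \<Sum>j<Suc N. y i * y j * moment \<alpha> A B s (i + j)) > 0"
proof -
  define X where "X = max (s + 1) (1 + (\<Sum>i<N. \<bar>y i\<bar>))"
  define C where "C = B * exp (- (X + 1))"
  define f where "f = (\<lambda>x. indicator {0..} x * ((\<Sum>i<Suc N. y i * x ^ i)\<^sup>2 * weight \<alpha> A B s x))"
  have "\<alpha> > -1"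
    using assms(1) by simp
  note quadratic_form = moment_quadratic_form[where y = y and N = "Suc N" and A = A and B = B and s = s,
      OF this]
  have "0 \<le> (\<Sum>i<N. \<bar>y i\<bar>)"
    by (simp add: sum_nonneg)
  then have X1: "X \<ge> 1"
    by (simp add: X_def le_max_iff_disj)
  have "C * indicator {X..X + 1} x \<le> f x" for x
  proof (cases "x \<in> {X..X + 1}")
    case True
    then have x: "X \<le> x" "x \<le> X + 1" "x \<ge> 1" "s < x"
      using X1 by (auto simp: X_def)
    have "(\<Sum>i<Suc N. y i * x ^ i) \<ge> 1"
      by (rule monic_poly_ge_one[where y = y and N = N, OF assms(4)]) (use x in \<open>simp add: X_def\<close>)
    then have poly: "(\<Sum>i<Suc N. y i * x ^ i)\<^sup>2 \<ge> 1"
      by (simp add: one_le_power)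
    have "C \<le> B * exp (- x)"
      using x assms(3) by (simp add: C_def)
    also have "\<dots> \<le> weight \<alpha> A B s x"
      using x assms by (intro weight_ge_exp) auto
    finally have w: "C \<le> weight \<alpha> A B s x" .
    have "1 * C \<le> (\<Sum>i<Suc N. y i * x ^ i)\<^sup>2 * weight \<alpha> A B s x"
      by (rule mult_mono[OF poly w]) (use assms(3) in \<open>simp_all add: C_def\<close>)
    then show ?thesis
      using True x by (simp add: f_def)
  next
    case False
    then show ?thesis
      using weight_nonneg[of A B] assms by (simp add: f_def)
  qed
  then have "integral\<^sup>L lborel (\<lambda>x. C * indicator {X..X + 1} x) \<le> integral\<^sup>L lborel f"
    using quadratic_form(1) by (intro integral_mono) (auto simp: f_def)
  moreover have "C > 0"
    using assms(3) by (simp add: C_def)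
  ultimately show ?thesis
    using quadratic_form(2) by (simp add: f_def)
qed

lemma det_hankel_moment_pos:
  assumes "\<alpha> > 0" "A \<ge> 0" "B > 0"
  shows "det (hankel_mat (moment \<alpha> A B s) m) > 0"
proof (induction m)
  case (Suc m)
  then have "det (hankel_mat (moment \<alpha> A B s) m) \<noteq> 0"
    by simp
  with Suc moment_quadratic_form_pos[OF assms, of "monic_orth_coeff (moment \<alpha> A B s) m" m s]
  show ?case
    by (simp add: det_hankel_mat_Suc hankel_schur_eq_quadratic_form monic_orth_coeff_def)
qed simp

section \<open>The logarithmic derivatives of D_n\<close>

definition hankel_power_form :: "(nat \<Rightarrow> real) \<Rightarrow> nat \<Rightarrow> real \<Rightarrow> real" where
  "hankel_power_form \<mu> n s = (\<Sum>i<n. s ^ i * hankel_solve \<mu> n (\<lambda>j. s ^ j) i)"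

lemma hankel_power_form_eq_double_sum:
  "hankel_power_form \<mu> n s = (\<Sum>i<n. \<Sum>j<n. s ^ i * hankel_inv \<mu> n i j * s ^ j)"
  by (simp add: hankel_power_form_def hankel_solve_def sum_distrib_left mult_ac)

lemma ln_hankelD_has_real_derivative:
  assumes "\<alpha> > 0" "A \<ge> 0" "B > 0" "s > 0"
  shows "((\<lambda>u. ln (hankelD \<alpha> A B n u)) has_real_derivative
           - B * s powr \<alpha> * exp (- s) * hankel_power_form (moment \<alpha> A B s) n s) (at s)"
proof -
  let ?\<mu> = "moment \<alpha> A B s" and ?\<phi> = "- B * s powr \<alpha> * exp (- s)"
  have pos: "det (hankel_mat ?\<mu> n) > 0"
    by (rule det_hankel_moment_pos[OF assms(1-3)])
  have "((\<lambda>u. det (hankel_mat (moment \<alpha> A B u) n)) has_real_derivative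
      det (hankel_mat ?\<mu> n) * (\<Sum>i<n. \<Sum>j<n. ?\<phi> * s ^ (i + j) * hankel_inv ?\<mu> n i j)) (at s)"
    using moment_has_real_derivative assms pos by (intro has_field_derivative_det_hankel_mat) auto
  from DERIV_chain2[OF DERIV_ln_divide[OF pos] this] pos
  have "((\<lambda>u. ln (det (hankel_mat (moment \<alpha> A B u) n))) has_real_derivative
      (\<Sum>i<n. \<Sum>j<n. ?\<phi> * s ^ (i + j) * hankel_inv ?\<mu> n i j)) (at s)"
    by simp
  moreover have "(\<Sum>i<n. \<Sum>j<n. ?\<phi> * s ^ (i + j) * hankel_inv ?\<mu> n i j) = ?\<phi> * hankel_power_form ?\<mu> n s"
    by (simp add: hankel_power_form_def hankel_solve_def sum_distrib_left power_add mult_ac)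
  ultimately show ?thesis
    by (simp add: hankelD_eq_det)
qed

lemma hankel_inv_moment_has_real_derivative:
  assumes "\<alpha> > 0" "A \<ge> 0" "B > 0" "t > 0" "i < n" "j < n"
  defines "\<mu> \<equiv> moment \<alpha> A B t"
  shows "((\<lambda>s. hankel_inv (moment \<alpha> A B s) n i j) has_real_derivative
      B * t powr \<alpha> * exp (- t) * hankel_solve \<mu> n (\<lambda>l. t ^ l) i * hankel_solve \<mu> n (\<lambda>l. t ^ l) j) (at t)"
proof -
  have "det (hankel_mat \<mu> n) \<noteq> 0"
    using det_hankel_moment_pos[OF assms(1-3)] unfolding \<mu>_def by (metis less_irrefl)
  then have "((\<lambda>s. hankel_inv (moment \<alpha> A B s) n i j) has_real_derivative
      - (\<Sum>l<n. \<Sum>p<n. hankel_inv \<mu> n i l * (- B * t powr \<alpha> * exp (- t) * t ^ (l + p)) * hankel_inv \<mu> n p j)) (at t)"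
    unfolding \<mu>_def using assms(1,4-6) moment_has_real_derivative
    by (intro hankel_inv_has_real_derivative) auto
  moreover have "(\<Sum>l<n. \<Sum>p<n. hankel_inv \<mu> n i l * (- B * t powr \<alpha> * exp (- t) * t ^ (l + p)) * hankel_inv \<mu> n p j)
      = - (B * t powr \<alpha> * exp (- t) * hankel_solve \<mu> n (\<lambda>l. t ^ l) i * hankel_solve \<mu> n (\<lambda>l. t ^ l) j)"
    by (simp add: hankel_solve_def sum_product sum_distrib_left sum_negf power_add hankel_inv_sym[of \<mu> n _ j] mult_ac)
  ultimately show ?thesis
    by simp
qed

lemma hankel_power_form_moment_product_rule:
  fixes \<alpha> A B t :: real and n :: nat
  assumes "\<alpha> > 0" "A \<ge> 0" "B > 0" "t > 0"
  defines "\<mu> \<equiv> moment \<alpha> A B t"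
  defines "u \<equiv> hankel_solve \<mu> n (\<lambda>j. t ^ j)"
  shows "((\<lambda>s. hankel_power_form (moment \<alpha> A B s) n s) has_real_derivative
      (\<Sum>i<n. \<Sum>j<n. real i * t ^ (i - 1) * hankel_inv \<mu> n i j * t ^ j
        + t ^ i * (B * t powr \<alpha> * exp (- t) * u i * u j) * t ^ j
        + t ^ i * hankel_inv \<mu> n i j * (real j * t ^ (j - 1)))) (at t)"
  unfolding hankel_power_form_eq_double_sum
proof (intro DERIV_sum)
  fix i j assume "i \<in> {..<n}" "j \<in> {..<n}"
  then have "((\<lambda>s. hankel_inv (moment \<alpha> A B s) n i j) has_real_derivative
      B * t powr \<alpha> * exp (- t) * u i * u j) (at t)"
    unfolding u_def \<mu>_def by (intro hankel_inv_moment_has_real_derivative assms(1-4)) auto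
  from DERIV_mult[OF DERIV_mult[OF DERIV_pow this] DERIV_pow]
  show "((\<lambda>s. s ^ i * hankel_inv (moment \<alpha> A B s) n i j * s ^ j) has_real_derivative
      real i * t ^ (i - 1) * hankel_inv \<mu> n i j * t ^ j + t ^ i * (B * t powr \<alpha> * exp (- t) * u i * u j) * t ^ j
      + t ^ i * hankel_inv \<mu> n i j * (real j * t ^ (j - 1))) (at t)"
    unfolding \<mu>_def by (simp add: algebra_simps)
qed

lemma real_times_power_pred: "real i * (t::real) ^ (i - 1) * t = real i * t ^ i"
  by (cases i) auto

lemma hankel_power_form_has_real_derivative:
  fixes \<alpha> A B t :: real and n :: nat
  assumes "\<alpha> > 0" "A \<ge> 0" "B > 0" "t > 0"
  defines "\<mu> \<equiv> moment \<alpha> A B t"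
  defines "u \<equiv> hankel_solve \<mu> n (\<lambda>j. t ^ j)"
  defines "c \<equiv> - B * t powr (\<alpha> + 1) * exp (- t)"
  shows "((\<lambda>s. hankel_power_form (moment \<alpha> A B s) n s) has_real_derivative
      (2 * (\<Sum>i<n. real i * t ^ i * u i) - c * (hankel_power_form \<mu> n t)\<^sup>2) / t) (at t)"
proof -
  let ?K = "hankel_inv \<mu> n"
  let ?D = "\<Sum>i<n. \<Sum>j<n. real i * t ^ (i - 1) * ?K i j * t ^ j
      + t ^ i * (B * t powr \<alpha> * exp (- t) * u i * u j) * t ^ j + t ^ i * ?K i j * (real j * t ^ (j - 1))"
  have "t * ?D = (\<Sum>i<n. \<Sum>j<n. real i * t ^ i * ?K i j * t ^ j)
      + (\<Sum>i<n. \<Sum>j<n. real j * t ^ j * ?K j i * t ^ i)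
      + t powr (\<alpha> + 1) * B * exp (- t) * (\<Sum>i<n. \<Sum>j<n. (t ^ i * u i) * (t ^ j * u j))"
    using assms(4)
    by (simp add: sum_distrib_left sum.distrib real_times_power_pred[of _ t, symmetric]
        powr_add hankel_inv_sym[of \<mu> n] algebra_simps)
  also have "(\<Sum>i<n. \<Sum>j<n. real j * t ^ j * ?K j i * t ^ i) = (\<Sum>i<n. \<Sum>j<n. real i * t ^ i * ?K i j * t ^ j)"
    by (rule sum.swap)
  also have "(\<Sum>i<n. \<Sum>j<n. real i * t ^ i * ?K i j * t ^ j) = (\<Sum>i<n. real i * t ^ i * u i)"
    by (simp add: u_def hankel_solve_def sum_distrib_left mult_ac)
  also have "(\<Sum>i<n. \<Sum>j<n. (t ^ i * u i) * (t ^ j * u j)) = (hankel_power_form \<mu> n t)\<^sup>2"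
    by (simp add: hankel_power_form_def u_def power2_eq_square sum_product)
  finally have "?D = (2 * (\<Sum>i<n. real i * t ^ i * u i) - c * (hankel_power_form \<mu> n t)\<^sup>2) / t"
    using assms(4) by (simp add: c_def field_simps)
  with hankel_power_form_moment_product_rule[OF assms(1-4), of n] show ?thesis
    unfolding u_def \<mu>_def by simp
qed

lemma weight_factor_has_real_derivative:
  assumes "s > 0"
  shows "((\<lambda>s. - B * s powr \<alpha> * exp (- s)) has_real_derivative
           - B * s powr \<alpha> * exp (- s) * (\<alpha> / s - 1)) (at s)"
proof -
  have "((\<lambda>s. - B * s powr \<alpha> * exp (- s)) has_real_derivative
      - B * (\<alpha> * s powr (\<alpha> - 1)) * exp (- s) + - B * s powr \<alpha> * (exp (- s) * - 1)) (at s)"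
    by (intro DERIV_mult DERIV_cmult has_real_derivative_powr assms derivative_eq_intros) auto
  moreover have "- B * (\<alpha> * s powr (\<alpha> - 1)) * exp (- s) + - B * s powr \<alpha> * (exp (- s) * - 1)
      = - B * s powr \<alpha> * exp (- s) * (\<alpha> / s - 1)"
    using assms by (simp add: powr_diff field_simps)
  ultimately show ?thesis
    by simp
qed

lemma ln_hankelD_second_derivative:
  fixes \<alpha> A B t :: real and n :: nat
  assumes "\<alpha> > 0" "A \<ge> 0" "B > 0" "t > 0"
  defines "L \<equiv> \<lambda>u. ln (hankelD \<alpha> A B n u)"
  defines "\<mu> \<equiv> moment \<alpha> A B t" and "c \<equiv> - B * t powr (\<alpha> + 1) * exp (- t)"
  defines "a \<equiv> hankel_power_form \<mu> n t"
    and "b \<equiv> (\<Sum>i<n. real i * t ^ i * hankel_solve \<mu> n (\<lambda>j. t ^ j) i)"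
  shows "\<forall>\<^sub>F s in nhds t. L differentiable (at s)"
    and "deriv L differentiable (at t)"
    and "t\<^sup>2 * deriv (deriv L) t = c * (\<alpha> - t) * a + c * (2 * b - c * a\<^sup>2)"
proof -
  define \<phi> where "\<phi> s = - B * s powr \<alpha> * exp (- s)" for s
  define F where "F s = \<phi> s * hankel_power_form (moment \<alpha> A B s) n s" for s
  have near: "\<forall>\<^sub>F s in nhds t. s > 0"
    using assms(4) eventually_nhds_in_open[of "{0<..}" t] by simp
  have L': "(L has_real_derivative F s) (at s)" if "s > 0" for s
    unfolding L_def F_def \<phi>_def by (rule ln_hankelD_has_real_derivative[OF assms(1-3) that])
  show "\<forall>\<^sub>F s in nhds t. L differentiable (at s)"
    using near by eventually_elim (use L' real_differentiable_def in blast)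
  have "(\<phi> has_real_derivative \<phi> t * (\<alpha> / t - 1)) (at t)"
    unfolding \<phi>_def[abs_def] using weight_factor_has_real_derivative[OF assms(4)] .
  then have "(F has_real_derivative \<phi> t * (\<alpha> / t - 1) * a + \<phi> t * ((2 * b - c * a\<^sup>2) / t)) (at t)"
    unfolding F_def[abs_def] a_def b_def c_def \<mu>_def
    by (rule DERIV_cong[OF DERIV_mult[OF _ hankel_power_form_has_real_derivative[OF assms(1-4)]]])
       (simp add: algebra_simps)
  moreover have "\<forall>\<^sub>F s in nhds t. deriv L s = F s"
    using near by eventually_elim (use L' DERIV_imp_deriv in blast)
  ultimately have L'': "(deriv L has_real_derivative \<phi> t * (\<alpha> / t - 1) * a + \<phi> t * ((2 * b - c * a\<^sup>2) / t)) (at t)"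
    by (simp add: DERIV_cong_ev)
  then show "deriv L differentiable (at t)"
    using real_differentiable_def by blast
  have "c = t * \<phi> t"
    using assms(4) by (simp add: c_def \<phi>_def powr_add)
  with L'' assms(4) show "t\<^sup>2 * deriv (deriv L) t = c * (\<alpha> - t) * a + c * (2 * b - c * a\<^sup>2)"
    by (simp add: DERIV_imp_deriv power2_eq_square field_simps)
qed

theorem theorem4:
  fixes \<alpha> A B t :: real and n :: nat
  assumes "\<alpha> > 0" and "A \<ge> 0" and "B > 0" and "t > 0" and "n \<ge> 1"
  shows "(\<forall>\<^sub>F s in nhds t. (\<lambda>u. ln (hankelD \<alpha> A B n u)) differentiable (at s)) \<and>
         (deriv (\<lambda>u. ln (hankelD \<alpha> A B n u)) differentiable (at t)) \<and>
         (t\<^sup>2 * deriv (deriv (\<lambda>u. ln (hankelD \<alpha> A B n u))) t =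
           - real n * (real n + \<alpha>)
           + hankelD \<alpha> A B (n + 1) t * hankelD \<alpha> A B (n - 1) t / (hankelD \<alpha> A B n t)\<^sup>2)"
proof -
  let ?\<mu> = "moment \<alpha> A B t" and ?c = "- B * t powr (\<alpha> + 1) * exp (- t)"
  have det: "det (hankel_mat ?\<mu> n) > 0"
    by (rule det_hankel_moment_pos[OF assms(1-3)])
  interpret hankel_recurrence ?\<mu> \<alpha> ?c t n
  proof
    show "?\<mu> (Suc k) = (real k + \<alpha> + 1) * ?\<mu> k - ?c * t ^ k" for k
      using moment_Suc[OF assms(1), of t A B k] assms(4) by (simp add: powr_add powr_realpow)
  qed (use det assms(5) in auto)
  have "hankel_schur ?\<mu> n * K (n - 1) (n - 1)
      = hankelD \<alpha> A B (n + 1) t * hankelD \<alpha> A B (n - 1) t / (hankelD \<alpha> A B n t)\<^sup>2"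
    using det_hankel_mat_Suc[of ?\<mu> n] hankel_inv_last[of ?\<mu> "n - 1"] det assms(5)
    by (simp add: hankelD_eq_det power2_eq_square)
  with ln_hankelD_second_derivative[OF assms(1-4), of n] scaled_second_log_derivative_identity
  show ?thesis
    by (simp add: hankel_power_form_def)
qed

end
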